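(* Let $\alpha\in(0,1)$ and $\gamma_n=\alpha n$ for each $n$, and let $\lambda_n$ satisfy $\lambda_n=o(n)$ and $\lambda_n=\omega(1)$. Let $K:\mathbb{N}_0\to\mathbb{N}_0$, $n\mapsto K_n$, be a scaling and let \[ r_4(\alpha,\lambda_n) = 1+\frac{\log\!\left(1+\frac{n\alpha}{\lambda_n}\right)+\alpha+\log(1-\alpha)}{\frac{1-\alpha}{2}-\log\!\left(\frac{1+\alpha}{2}\right)}. \] If $K_n > r_4(\alpha,\lambda_n)$ for all $n$, then \[ \lim_{n\to\infty} \mathbb{P}\big[\,|C_{max}(n,K_n,\gamma_n)| > n-\gamma_n-\lambda_n\,\big] = 1. \]
   Context: Random K-out graph $\mathbb{H}(n;K_n)$: on vertex set $V=\{v_1,\dots,v_n\}$ with labels $\mathcal{N}=\{1,\dots,n\}$, each node $v_i$ independently selects a set $\Gamma_{n,i}\subseteq \mathcal{N}\setminus\{i\}$ of $K_n$ distinct labels uniformly at random (the sets $\Gamma_{n,1},\dots,\Gamma_{n,n}$ are mutually independent). Distinct nodes $v_i,v_j$ are adjacent if $j\in\Gamma_{n,i}$ or $i\in\Gamma_{n,j}$ (undirected graph). The graph $\mathbb{H}(n;K_n,\gamma_n)$ is obtained by choosing a set $D\subset V$ of $\gamma_n$ nodes uniformly at random and deleting them: it has vertex set $R=V\setminus D$, and two distinct vertices of $R$ are adjacent iff they are adjacent in $\mathbb{H}(n;K_n)$. $C_{max}(n,K_n,\gamma_n)$ denotes the vertex set of a largest connected component of $\mathbb{H}(n;K_n,\gamma_n)$.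 $\log$ is the natural logarithm; Landau notation is as $n\to\infty$. *)

theory Defs
  imports "HOL-Probability.Probability"
begin

definition kout_choice :: "nat \<Rightarrow> nat \<Rightarrow> (nat \<Rightarrow> nat set) pmf" where
  "kout_choice n K = Pi_pmf {1..n} {}
     (\<lambda>i. pmf_of_set {S. S \<subseteq> {1..n} - {i} \<and> card S = K})"

definition deleted_set :: "nat \<Rightarrow> nat \<Rightarrow> nat set pmf" where
  "deleted_set n g = pmf_of_set {D. D \<subseteq> {1..n} \<and> card D = g}"

definition kout_adj :: "(nat \<Rightarrow> nat set) \<Rightarrow> nat \<Rightarrow> nat \<Rightarrow> bool" where
  "kout_adj \<Gamma> i j \<longleftrightarrow> i \<noteq> j \<and> (j \<in> \<Gamma> i \<or> i \<in> \<Gamma> j)"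

definition induced_edges :: "(nat \<Rightarrow> nat set) \<Rightarrow> nat set \<Rightarrow> (nat \<times> nat) set" where
  "induced_edges \<Gamma> R = {(i, j). i \<in> R \<and> j \<in> R \<and> kout_adj \<Gamma> i j}"

definition component :: "(nat \<Rightarrow> nat set) \<Rightarrow> nat set \<Rightarrow> nat \<Rightarrow> nat set" where
  "component \<Gamma> R v = {u \<in> R. (v, u) \<in> (induced_edges \<Gamma> R)\<^sup>*}"

definition max_component_size :: "(nat \<Rightarrow> nat set) \<Rightarrow> nat set \<Rightarrow> nat" where
  "max_component_size \<Gamma> R = Max (insert 0 ((\<lambda>v. card (component \<Gamma> R v)) ` R))"

definition H_model :: "nat \<Rightarrow> nat \<Rightarrow> nat \<Rightarrow> ((nat \<Rightarrow> nat set) \<times> nat set) pmf" where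
  "H_model n K g = pair_pmf (kout_choice n K) (deleted_set n g)"

definition Cmax_size :: "nat \<Rightarrow> (nat \<Rightarrow> nat set) \<times> nat set \<Rightarrow> nat" where
  "Cmax_size n \<omega> = max_component_size (fst \<omega>) ({1..n} - snd \<omega>)"

definition r4 :: "real \<Rightarrow> real \<Rightarrow> real \<Rightarrow> real" where
  "r4 \<alpha> l n = 1 + (ln (1 + n * \<alpha> / l) + \<alpha> + ln (1 - \<alpha>)) /
                   ((1 - \<alpha>) / 2 - ln ((1 + \<alpha>) / 2))"

end

theory Submission
  imports Defs
begin

text \<open>
  If the largest surviving component misses at least \<open>\<lambda>\<close> of the \<open>n - \<gamma>\<close> surviving nodes, then some
  union \<open>S\<close> of surviving components has \<open>\<lambda> \<le> |S| \<le> (n - \<gamma>)/2\<close>. Every node of \<open>S\<close> must then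
  choose all its \<open>K\<close> labels inside \<open>S \<union> D\<close>, which for \<open>|S| = r\<close> has probability at most
  \<open>((r + \<gamma>)/n)^(K r)\<close> whatever the deleted set \<open>D\<close> is. The union bound over \<open>S\<close>, together with
  \<open>C(m, r) \<le> (e m / r)^r\<close>, bounds the failure probability by \<open>\<Sum>\<^sub>r\<^sub>\<ge>\<^sub>\<lambda> (e n/r \<cdot> ((r + \<gamma>)/n)^K)^r\<close>.
  The base is at most \<open>1/2\<close>. If \<open>r K > n\<close>, because \<open>n/r < K\<close> and \<open>(r + \<gamma>)/n \<le> (1 + \<alpha>)/2\<close>.
  If \<open>r K \<le> n\<close>, because \<open>((r + \<gamma>)/n)^K \<le> \<alpha>^K e^(1/\<alpha>)\<close>, while \<open>K > r\<^sub>4\<close> says precisely that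
  \<open>n/r \<le> n/\<lambda>\<close> is at most a constant times \<open>e^(c K)\<close>, where \<open>c < - ln \<alpha>\<close> is the denominator of
  \<open>r\<^sub>4\<close>. Both estimates need \<open>K\<close> above a constant depending on \<open>\<alpha>\<close>, which holds eventually
  since \<open>r\<^sub>4 \<rightarrow> \<infinity>\<close> for \<open>\<lambda> = o(n)\<close>. The failure probability is thus \<open>O(2^(-\<lambda>)) \<rightarrow> 0\<close>.
\<close>

lemma power_div_fact_le_exp:
  fixes x :: real
  assumes "0 \<le> x"
  shows "x ^ k / fact k \<le> exp x"
proof -
  have sums: "(\<lambda>n. x ^ n / fact n) sums exp x"
    using exp_converges[of x] by (simp add: divide_inverse_commute scaleR_conv_of_real)
  have "(\<Sum>n\<in>{k}. x ^ n / fact n) \<le> (\<Sum>n. x ^ n / fact n)"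
    by (rule sum_le_suminf) (use sums assms in \<open>auto simp: sums_iff\<close>)
  then show ?thesis
    using sums by (simp add: sums_iff)
qed

lemma binomial_le_exp_pow:
  assumes "0 < k"
  shows "real (n choose k) \<le> (exp 1 * real n / real k) ^ k"
proof -
  have "real (n choose k) * fact k \<le> real n ^ k"
    using binomial_fact_pow[of n k] by (metis of_nat_fact of_nat_le_iff of_nat_mult of_nat_power)
  then have "real (n choose k) \<le> real n ^ k / fact k"
    by (simp add: field_simps)
  also have "\<dots> \<le> real n ^ k * (exp (real k) / real k ^ k)"
  proof -
    have inv_fact_le: "1 / fact k \<le> exp (real k) / real k ^ k"
      using power_div_fact_le_exp[of "real k" k] assms by (simp add: field_simps)
    show ?thesis
      using mult_left_mono[OF inv_fact_le, of "real n ^ k"] by simp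
  qed
  also have "\<dots> = (exp 1 * real n / real k) ^ k"
    by (simp add: power_divide power_mult_distrib exp_of_nat_mult[symmetric])
  finally show ?thesis .
qed

lemma binomial_ratio_le_power:
  assumes "w \<le> N"
  shows "real (w choose K) / real (N choose K) \<le> ((real w + 1) / (real N + 1)) ^ K"
proof (cases "K \<le> w")
  case False
  then show ?thesis by (simp add: binomial_eq_0)
next
  case True
  have factor_le: "real (w - i) / real (N - i) \<le> (real w + 1) / (real N + 1)" if "i < w" for i
  proof -
    have "0 \<le> (real N - real w) * (1 + real i)"
      using assms by simp
    then have "real (w - i) * (real N + 1) \<le> (real w + 1) * real (N - i)"
      using that assms by (simp add: of_nat_diff algebra_simps)
    then show ?thesis
      using that assms by (simp add: field_simps)
  qed
  have "real (w choose K) / real (N choose K)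
      = (\<Prod>i = 0..<K. (real (w - i) / real (K - i)) / (real (N - i) / real (K - i)))"
    using True assms by (simp add: binomial_altdef_of_nat prod_dividef)
  also have "\<dots> = (\<Prod>i = 0..<K. real (w - i) / real (N - i))"
    by (intro prod.cong) auto
  also have "\<dots> \<le> (\<Prod>i = 0..<K. (real w + 1) / (real N + 1))"
  proof (intro prod_mono conjI)
    fix i assume "i \<in> {0..<K}"
    then show "real (w - i) / real (N - i) \<le> (real w + 1) / (real N + 1)"
      using True by (intro factor_le) simp
  qed simp
  finally show ?thesis by simp
qed

lemma power_le_two_div_ln_sq:
  fixes \<rho> :: real
  assumes "0 < \<rho>" "\<rho> < 1" "0 < K"
  shows "\<rho> ^ K \<le> 2 / (ln \<rho> * real K)\<^sup>2"
proof -
  define x where "x = - ln \<rho> * real K"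
  have x_pos: "0 < x"
    unfolding x_def using assms by (simp add: mult_neg_pos)
  have "\<rho> ^ K = exp (real K * ln \<rho>)"
    using assms by (simp add: exp_of_nat_mult)
  also have "\<dots> = 1 / exp x"
    unfolding x_def by (simp add: exp_minus field_simps)
  also have "\<dots> \<le> 1 / (x\<^sup>2 / 2)"
    using power_div_fact_le_exp[of x 2] x_pos by (intro divide_left_mono) (simp_all add: numeral_2_eq_2)
  also have "\<dots> = 2 / (ln \<rho> * real K)\<^sup>2"
    unfolding x_def by (simp add: power2_eq_square)
  finally show ?thesis .
qed

lemma power_add_le_exp:
  fixes \<alpha> y :: real
  assumes "0 < \<alpha>" "0 \<le> y" "real K * y \<le> 1"
  shows "(\<alpha> + y) ^ K \<le> exp (real K * ln \<alpha> + 1 / \<alpha>)"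
proof -
  have "(\<alpha> + y) ^ K = \<alpha> ^ K * (1 + y / \<alpha>) ^ K"
    using assms by (simp add: power_mult_distrib[symmetric] field_simps)
  also have "\<dots> \<le> \<alpha> ^ K * exp (y / \<alpha>) ^ K"
    using assms by (intro mult_left_mono power_mono) auto
  also have "\<dots> = exp (real K * ln \<alpha>) * exp (real K * (y / \<alpha>))"
    using assms(1) by (simp only: exp_of_nat_mult exp_ln)
  also have "\<dots> \<le> exp (real K * ln \<alpha>) * exp (1 / \<alpha>)"
  proof -
    have "real K * (y / \<alpha>) \<le> 1 / \<alpha>"
      using assms by (simp add: divide_right_mono)
    then show ?thesis
      by simp
  qed
  finally show ?thesis
    by (simp add: exp_add)
qed

lemma sum_power_tail_le:
  fixes x :: real
  assumes "finite I" "\<And>r. r \<in> I \<Longrightarrow> a \<le> r" "0 < x" "x < 1"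
  shows "(\<Sum>r\<in>I. x ^ r) \<le> x ^ a / (1 - x)"
proof -
  have inj: "inj_on (\<lambda>r. r - a) I"
    using assms(2) by (intro inj_onI) (metis le_add_diff_inverse)
  have "(\<Sum>r\<in>I. x ^ r) = x ^ a * (\<Sum>r\<in>I. x ^ (r - a))"
    using assms(2) by (simp add: sum_distrib_left power_add[symmetric])
  also have "\<dots> = x ^ a * (\<Sum>i\<in>(\<lambda>r. r - a) ` I. x ^ i)"
    using inj by (simp add: sum.reindex)
  also have "\<dots> \<le> x ^ a * (1 / (1 - x))"
    using assms by (intro mult_left_mono less_imp_le geometric_sum_less) auto
  finally show ?thesis
    by simp
qed

section \<open>Vertex sets closed under adjacency\<close>

definition adj_closed :: "(nat \<Rightarrow> nat set) \<Rightarrow> nat set \<Rightarrow> nat set \<Rightarrow> bool" where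
  "adj_closed \<Gamma> R S \<longleftrightarrow> S \<subseteq> R \<and> (\<forall>i\<in>S. \<forall>j\<in>R - S. \<not> kout_adj \<Gamma> i j)"

lemma kout_adj_commute: "kout_adj \<Gamma> i j \<longleftrightarrow> kout_adj \<Gamma> j i"
  unfolding kout_adj_def by auto

lemma adj_closed_self: "adj_closed \<Gamma> R R"
  unfolding adj_closed_def by auto

lemma adj_closed_Diff:
  assumes "adj_closed \<Gamma> R S" "adj_closed \<Gamma> R T"
  shows "adj_closed \<Gamma> R (S - T)"
  using assms kout_adj_commute unfolding adj_closed_def by blast

lemma component_subset_adj_closed:
  assumes "adj_closed \<Gamma> R S" "v \<in> S"
  shows "component \<Gamma> R v \<subseteq> S"
proof
  fix u
  assume "u \<in> component \<Gamma> R v"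
  then have "(v, u) \<in> (induced_edges \<Gamma> R)\<^sup>*"
    by (simp add: component_def)
  then show "u \<in> S"
  proof (induction rule: rtrancl_induct)
    case base
    then show ?case using assms by simp
  next
    case (step y z)
    then show ?case
      using assms unfolding adj_closed_def induced_edges_def by blast
  qed
qed

lemma adj_closed_component: "adj_closed \<Gamma> R (component \<Gamma> R v)"
  unfolding adj_closed_def
proof (intro conjI ballI notI)
  show "component \<Gamma> R v \<subseteq> R"
    by (auto simp: component_def)
next
  fix i j
  assume i: "i \<in> component \<Gamma> R v" and j: "j \<in> R - component \<Gamma> R v" and "kout_adj \<Gamma> i j"
  then have "(i, j) \<in> induced_edges \<Gamma> R"
    by (simp add: induced_edges_def component_def)
  moreover have "(v, i) \<in> (induced_edges \<Gamma> R)\<^sup>*"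
    using i by (simp add: component_def)
  ultimately have "(v, j) \<in> (induced_edges \<Gamma> R)\<^sup>*"
    by (simp add: rtrancl.rtrancl_into_rtrancl)
  with j show False
    by (simp add: component_def)
qed

lemma self_in_component: "v \<in> R \<Longrightarrow> v \<in> component \<Gamma> R v"
  by (simp add: component_def)

lemma card_component_le_max_component_size:
  assumes "finite R" "v \<in> R"
  shows "card (component \<Gamma> R v) \<le> max_component_size \<Gamma> R"
  unfolding max_component_size_def using assms by (intro Max_ge) auto

lemma adj_closed_choices_disjoint:
  assumes "adj_closed \<Gamma> R S" "i \<in> S"
  shows "\<Gamma> i \<inter> (R - S) = {}"
proof -
  have "\<not> kout_adj \<Gamma> i j" if "j \<in> R - S" for j
    using assms that unfolding adj_closed_def by blast
  moreover have "i \<notin> R - S"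
    using assms(2) by blast
  ultimately show ?thesis
    unfolding kout_adj_def by blast
qed

lemma minimal_adj_closed_small_or_component:
  fixes lam :: real
  assumes fin: "finite R" and S: "adj_closed \<Gamma> R S" "v \<in> S"
    and minimal: "\<forall>T. adj_closed \<Gamma> R T \<and> lam \<le> real (card T) \<longrightarrow> card S \<le> card T"
  shows "real (card S) < 2 * lam \<or> S = component \<Gamma> R v"
proof (rule disjCI)
  define C where "C = component \<Gamma> R v"
  assume "S \<noteq> component \<Gamma> R v"
  then have CS: "C \<subset> S"
    unfolding C_def using component_subset_adj_closed[OF S] by blast
  have finS: "finite S"
    using S(1) fin by (auto simp: adj_closed_def intro: finite_subset)
  have vC: "v \<in> C"
    unfolding C_def using S by (intro self_in_component) (auto simp: adj_closed_def)
  have "card C < card S"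
    using finS CS by (rule psubset_card_mono)
  then have "real (card C) < lam"
    using minimal adj_closed_component[of \<Gamma> R v] unfolding C_def by (meson not_le)
  moreover have "card (S - C) < card S"
    using vC S(2) finS by (intro psubset_card_mono) auto
  then have "real (card (S - C)) < lam"
    using minimal adj_closed_Diff[OF S(1) adj_closed_component[of \<Gamma> R v]] unfolding C_def
    by (meson not_le)
  moreover have "card S = card C + card (S - C)"
    using psubset_imp_subset[OF CS] finS by (simp add: card_Diff_subset finite_subset card_mono)
  ultimately show "real (card S) < 2 * lam"
    by linarith
qed

lemma ex_adj_closed_medium:
  fixes lam :: real
  assumes fin: "finite R" and lam: "0 < lam" "4 * lam \<le> real (card R)"
    and small: "real (max_component_size \<Gamma> R) \<le> real (card R) - lam"
  obtains S where "adj_closed \<Gamma> R S" "lam \<le> real (card S)" "2 * card S \<le> card R"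
  \<comment> \<open>if the smallest closed \<open>S\<close> with \<open>|S| \<ge> \<lambda>\<close> is a single component, its complement works\<close>
proof -
  have "adj_closed \<Gamma> R R \<and> lam \<le> real (card R)"
    using adj_closed_self lam by simp
  then obtain S where S: "adj_closed \<Gamma> R S" "lam \<le> real (card S)"
    and minimal: "\<forall>T. adj_closed \<Gamma> R T \<and> lam \<le> real (card T) \<longrightarrow> card S \<le> card T"
    using ex_has_least_nat[of "\<lambda>S. adj_closed \<Gamma> R S \<and> lam \<le> real (card S)" R card] by blast
  have SR: "S \<subseteq> R"
    using S(1) by (simp add: adj_closed_def)
  show ?thesis
  proof (cases "2 * card S \<le> card R")
    case True
    then show ?thesis using S that by blast
  next
    case False
    have "S \<noteq> {}"
      using S(2) lam by (intro notI) simp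
    then obtain v where v: "v \<in> S"
      by blast
    with False lam have "S = component \<Gamma> R v"
      using minimal_adj_closed_small_or_component[OF fin S(1) v minimal] by linarith
    then have "real (card S) \<le> real (card R) - lam"
      using card_component_le_max_component_size[OF fin, of v \<Gamma>] small v SR by auto
    moreover have "card (R - S) = card R - card S" "card S \<le> card R"
      using SR fin by (auto simp: card_Diff_subset finite_subset card_mono)
    ultimately show ?thesis
      using that[OF adj_closed_Diff[OF adj_closed_self S(1)]] False by simp
  qed
qed

lemma small_max_component_subset_isolated:
  fixes lam :: real
  assumes "finite R" "0 < lam" "4 * lam \<le> real (card R)"
  shows "{\<Gamma>. real (max_component_size \<Gamma> R) \<le> real (card R) - lam}
    \<subseteq> (\<Union>S\<in>{S. S \<subseteq> R \<and> lam \<le> real (card S) \<and> 2 * card S \<le> card R}.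
          {\<Gamma>. \<forall>i\<in>S. \<Gamma> i \<inter> (R - S) = {}})"
proof
  fix \<Gamma>
  assume "\<Gamma> \<in> {\<Gamma>. real (max_component_size \<Gamma> R) \<le> real (card R) - lam}"
  then obtain S where S: "adj_closed \<Gamma> R S" "lam \<le> real (card S)" "2 * card S \<le> card R"
    using ex_adj_closed_medium[OF assms] by blast
  then show "\<Gamma> \<in> (\<Union>S\<in>{S. S \<subseteq> R \<and> lam \<le> real (card S) \<and> 2 * card S \<le> card R}.
      {\<Gamma>. \<forall>i\<in>S. \<Gamma> i \<inter> (R - S) = {}})"
    using adj_closed_choices_disjoint[OF S(1)] unfolding adj_closed_def by blast
qed

section \<open>The union bound\<close>

lemma prob_uniform_subset_disjoint_le:
  assumes "finite A" "K \<le> card A"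
  shows "measure_pmf.prob (pmf_of_set {T. T \<subseteq> A \<and> card T = K}) {T. T \<inter> Q = {}}
           \<le> ((real (card (A - Q)) + 1) / (real (card A) + 1)) ^ K"
proof -
  define X where "X = {T. T \<subseteq> A \<and> card T = K}"
  have card_X: "card X = card A choose K"
    unfolding X_def using assms(1) by (rule n_subsets)
  then have "X \<noteq> {}" "finite X"
    using assms by (auto intro: card_ge_0_finite)
  moreover have "X \<inter> {T. T \<inter> Q = {}} = {T. T \<subseteq> A - Q \<and> card T = K}"
    unfolding X_def by auto
  ultimately have "measure_pmf.prob (pmf_of_set X) {T. T \<inter> Q = {}}
      = real (card (A - Q) choose K) / real (card A choose K)"
    using assms(1) by (simp add: measure_pmf_of_set n_subsets card_X)
  also have "\<dots> \<le> ((real (card (A - Q)) + 1) / (real (card A) + 1)) ^ K"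
    using assms(1) by (intro binomial_ratio_le_power card_mono) auto
  finally show ?thesis
    unfolding X_def .
qed

lemma prob_choices_avoid_le:
  assumes S: "S \<subseteq> {1..n}" and Q: "Q \<subseteq> {1..n}" "S \<inter> Q = {}" and K: "K < n"
  shows "measure_pmf.prob (kout_choice n K) {\<Gamma>. \<forall>i\<in>S. \<Gamma> i \<inter> Q = {}}
           \<le> (real (n - card Q) / real n) ^ (K * card S)"
proof -
  define q where "q = (real (n - card Q) / real n) ^ K"
  define B where "B = (\<lambda>i. if i \<in> S then {T. T \<inter> Q = {}} else UNIV)"
  have event: "{\<Gamma>. \<forall>i\<in>S. \<Gamma> i \<inter> Q = {}} = Pi {1..n} B"
  proof (intro set_eqI iffI)
    fix \<Gamma>
    assume "\<Gamma> \<in> Pi {1..n} B"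
    then have "\<Gamma> i \<in> B i" if "i \<in> S" for i
      using that S by blast
    then show "\<Gamma> \<in> {\<Gamma>. \<forall>i\<in>S. \<Gamma> i \<inter> Q = {}}"
      by (simp add: B_def)
  qed (auto simp: B_def)
  have node_le: "measure_pmf.prob (pmf_of_set {T. T \<subseteq> {1..n} - {i} \<and> card T = K}) (B i)
      \<le> (if i \<in> S then q else 1)" if "i \<in> {1..n}" for i
  proof (cases "i \<in> S")
    case True
    have Q_sub: "Q \<subseteq> {1..n} - {i}"
      using True Q by blast
    have card_A: "card ({1..n} - {i}) + 1 = n"
      using that by simp
    have "card ({1..n} - {i} - Q) + 1 = n - card Q"
      using card_A card_mono[OF _ Q_sub] card_Diff_subset[OF finite_subset[OF Q_sub] Q_sub] by simp
    then have "(real (card ({1..n} - {i} - Q)) + 1) / (real (card ({1..n} - {i})) + 1)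
        = real (n - card Q) / real n"
      using card_A by (metis of_nat_1 of_nat_add)
    then show ?thesis
      using prob_uniform_subset_disjoint_le[of "{1..n} - {i}" K Q] that True K
      unfolding B_def q_def by simp
  qed (simp add: B_def)
  have "measure_pmf.prob (kout_choice n K) (Pi {1..n} B)
      = (\<Prod>i\<in>{1..n}. measure_pmf.prob (pmf_of_set {T. T \<subseteq> {1..n} - {i} \<and> card T = K}) (B i))"
    unfolding kout_choice_def by (rule measure_Pi_pmf_Pi) simp
  also have "\<dots> \<le> (\<Prod>i\<in>{1..n}. if i \<in> S then q else 1)"
    using node_le by (intro prod_mono) auto
  also have "\<dots> = q ^ card S"
    using S by (simp add: prod.If_cases Int_absorb1)
  finally show ?thesis
    unfolding event q_def by (simp add: power_mult)
qed

lemma sum_subsets_by_card: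
  fixes f :: "nat \<Rightarrow> real"
  assumes "finite R"
  shows "(\<Sum>S\<in>{S. S \<subseteq> R \<and> P (card S)}. f (card S))
       = (\<Sum>r\<in>{r. r \<le> card R \<and> P r}. real (card R choose r) * f r)"
proof -
  have "(\<Sum>S\<in>{S. S \<subseteq> R \<and> P (card S)}. f (card S))
      = (\<Sum>r\<in>{r. r \<le> card R \<and> P r}. \<Sum>S\<in>{S \<in> {S. S \<subseteq> R \<and> P (card S)}. card S = r}. f (card S))"
    using assms by (intro sum.group[symmetric]) (auto intro: card_mono)
  also have "\<dots> = (\<Sum>r\<in>{r. r \<le> card R \<and> P r}. real (card R choose r) * f r)"
  proof (intro sum.cong refl)
    fix r
    assume "r \<in> {r. r \<le> card R \<and> P r}"
    then have "{S \<in> {S. S \<subseteq> R \<and> P (card S)}. card S = r} = {S. S \<subseteq> R \<and> card S = r}"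
      by auto
    then show "(\<Sum>S\<in>{S \<in> {S. S \<subseteq> R \<and> P (card S)}. card S = r}. f (card S))
        = real (card R choose r) * f r"
      using n_subsets[OF assms, of r] by simp
  qed
  finally show ?thesis .
qed

lemma prob_small_max_component_le:
  fixes lam :: real
  assumes D: "D \<subseteq> {1..n}" "card D = g" and K: "K < n"
    and lam: "0 < lam" "4 * lam \<le> real (n - g)"
  shows "measure_pmf.prob (kout_choice n K)
           {\<Gamma>. real (max_component_size \<Gamma> ({1..n} - D)) \<le> real n - real g - lam}
     \<le> (\<Sum>r\<in>{r. r \<le> n - g \<and> lam \<le> real r \<and> 2 * r \<le> n - g}.
           real ((n - g) choose r) * ((real r + real g) / real n) ^ (K * r))"
proof -
  define R where "R = {1..n} - D"
  define P where "P = (\<lambda>r. lam \<le> real r \<and> 2 * r \<le> n - g)"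
  define SS where "SS = {S. S \<subseteq> R \<and> P (card S)}"
  define E where "E = (\<lambda>S. {\<Gamma>. \<forall>i\<in>S. \<Gamma> i \<inter> (R - S) = {}})"
  have fin_R: "finite R"
    unfolding R_def by simp
  have g_le: "g \<le> n"
    using D card_mono[of "{1..n}" D] by simp
  have card_R: "card R = n - g"
    unfolding R_def using D by (simp add: card_Diff_subset finite_subset)
  have "{\<Gamma>. real (max_component_size \<Gamma> ({1..n} - D)) \<le> real n - real g - lam}
      = {\<Gamma>. real (max_component_size \<Gamma> R) \<le> real (card R) - lam}"
    using card_R g_le unfolding R_def by (simp add: of_nat_diff)
  also have "\<dots> \<subseteq> (\<Union>S\<in>SS. E S)"
    using small_max_component_subset_isolated[OF fin_R lam(1)] lam(2)
    unfolding SS_def E_def P_def card_R by simp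
  finally have "measure_pmf.prob (kout_choice n K)
           {\<Gamma>. real (max_component_size \<Gamma> ({1..n} - D)) \<le> real n - real g - lam}
        \<le> measure_pmf.prob (kout_choice n K) (\<Union>S\<in>SS. E S)"
    by (rule measure_pmf.finite_measure_mono) simp
  also have "\<dots> \<le> (\<Sum>S\<in>SS. measure_pmf.prob (kout_choice n K) (E S))"
    using fin_R unfolding SS_def by (intro measure_pmf.finite_measure_subadditive_finite) auto
  also have "\<dots> \<le> (\<Sum>S\<in>SS. ((real (card S) + real g) / real n) ^ (K * card S))"
  proof (rule sum_mono)
    fix S
    assume "S \<in> SS"
    then have S: "S \<subseteq> R"
      unfolding SS_def by simp
    have "n - card (R - S) = card S + g"
      using card_mono[OF fin_R S] card_Diff_subset[OF finite_subset[OF S fin_R] S] card_R g_le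
      by simp
    then show "measure_pmf.prob (kout_choice n K) (E S) \<le> ((real (card S) + real g) / real n) ^ (K * card S)"
      using prob_choices_avoid_le[of S n "R - S" K] S K unfolding E_def R_def by auto
  qed
  also have "\<dots> = (\<Sum>r\<in>{r. r \<le> card R \<and> P r}. real (card R choose r) * ((real r + real g) / real n) ^ (K * r))"
    unfolding SS_def by (rule sum_subsets_by_card[OF fin_R])
  finally show ?thesis
    unfolding card_R P_def .
qed

lemma measure_pair_pmf_le:
  assumes "\<And>b. b \<in> set_pmf B \<Longrightarrow> measure_pmf.prob A {a. (a, b) \<in> E} \<le> \<epsilon>"
  shows "measure_pmf.prob (pair_pmf A B) E \<le> \<epsilon>"
proof -
  obtain b0 where "b0 \<in> set_pmf B"
    using set_pmf_not_empty by fast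
  then have \<epsilon>_nonneg: "0 \<le> \<epsilon>"
    using assms[of b0] measure_nonneg order_trans by blast
  have "pair_pmf A B = bind_pmf B (\<lambda>b. map_pmf (\<lambda>a. (a, b)) A)"
    unfolding pair_pmf_def map_pmf_def by (subst bind_commute_pmf) simp
  then have "emeasure (measure_pmf (pair_pmf A B)) E
      = (\<integral>\<^sup>+b. emeasure (measure_pmf A) {a. (a, b) \<in> E} \<partial>measure_pmf B)"
    by (simp add: vimage_def)
  also have "\<dots> \<le> ennreal \<epsilon>"
    using assms \<epsilon>_nonneg
    by (intro measure_pmf.nn_integral_le_const)
       (auto simp: AE_measure_pmf_iff measure_pmf.emeasure_eq_measure)
  finally show ?thesis
    using \<epsilon>_nonneg by (simp add: measure_pmf.emeasure_eq_measure)
qed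

lemma set_pmf_deleted_set:
  assumes "g \<le> n"
  shows "set_pmf (deleted_set n g) = {D. D \<subseteq> {1..n} \<and> card D = g}"
proof -
  have "card {D. D \<subseteq> {1..n} \<and> card D = g} = n choose g"
    using n_subsets[of "{1..n}" g] by simp
  then have "0 < card {D. D \<subseteq> {1..n} \<and> card D = g}"
    using assms by simp
  then have "{D. D \<subseteq> {1..n} \<and> card D = g} \<noteq> {}" "finite {D. D \<subseteq> {1..n} \<and> card D = g}"
    unfolding card_gt_0_iff by blast+
  then show ?thesis
    unfolding deleted_set_def by simp
qed

section \<open>The terms of the union bound\<close>

lemma base_le_half_if_large:
  fixes n r g \<rho> :: real and K :: nat
  assumes "0 < \<rho>" "\<rho> < 1" "0 < r" "0 < n" "0 \<le> g" "n < r * real K"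
    and "(r + g) / n \<le> \<rho>"
    and K_large: "4 * exp 1 / (ln \<rho>)\<^sup>2 \<le> real K"
  shows "exp 1 * n / r * ((r + g) / n) ^ K \<le> 1 / 2"
proof -
  have K_pos: "0 < K"
    using assms by (auto intro: ccontr)
  have ln_nz: "ln \<rho> \<noteq> 0"
    using assms by simp
  have "exp 1 * n / r * ((r + g) / n) ^ K \<le> exp 1 * real K * (2 / (ln \<rho> * real K)\<^sup>2)"
  proof (rule mult_mono)
    show "exp 1 * n / r \<le> exp 1 * real K"
      using assms by (simp add: field_simps)
    have "((r + g) / n) ^ K \<le> \<rho> ^ K"
      using assms by (intro power_mono) auto
    then show "((r + g) / n) ^ K \<le> 2 / (ln \<rho> * real K)\<^sup>2"
      using power_le_two_div_ln_sq[OF assms(1,2) K_pos] by linarith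
  qed (use assms in auto)
  also have "\<dots> = 2 * exp 1 / ((ln \<rho>)\<^sup>2 * real K)"
    using K_pos by (simp add: field_simps power2_eq_square)
  also have "\<dots> \<le> 1 / 2"
    using K_large K_pos ln_nz by (simp add: field_simps)
  finally show ?thesis .
qed

lemma base_le_half_if_small:
  fixes \<alpha> n r g c M :: real and K :: nat
  assumes "0 < \<alpha>" "0 < r" "0 < n" "0 \<le> g" "g \<le> \<alpha> * n" "r * real K \<le> n" "0 < M"
    and ratio: "n / r \<le> M * exp (c * real K)"
    and c_less: "c < - ln \<alpha>"
    and K_large: "2 * exp (1 + 1 / \<alpha>) * M / (- ln \<alpha> - c) \<le> real K"
  shows "exp 1 * n / r * ((r + g) / n) ^ K \<le> 1 / 2"
proof -
  define \<delta> where "\<delta> = - ln \<alpha> - c"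
  define A where "A = exp (1 + 1 / \<alpha>) * M"
  have \<delta>_pos: "0 < \<delta>"
    unfolding \<delta>_def using c_less by simp
  have "((r + g) / n) ^ K \<le> (\<alpha> + r / n) ^ K"
  proof (rule power_mono)
    have "g / n \<le> \<alpha>"
      using assms by (simp add: pos_divide_le_eq)
    then show "(r + g) / n \<le> \<alpha> + r / n"
      by (simp add: add_divide_distrib)
  qed (use assms in simp)
  also have "\<dots> \<le> exp (real K * ln \<alpha> + 1 / \<alpha>)"
    using assms by (intro power_add_le_exp) (auto simp: field_simps)
  finally have power_le: "((r + g) / n) ^ K \<le> exp (real K * ln \<alpha> + 1 / \<alpha>)" .
  have "exp 1 * n / r * ((r + g) / n) ^ K = exp 1 * (n / r) * ((r + g) / n) ^ K"
    by simp
  also have "\<dots> \<le> exp 1 * (M * exp (c * real K)) * exp (real K * ln \<alpha> + 1 / \<alpha>)"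
    using mult_left_mono[OF ratio, of "exp 1"] power_le assms by (intro mult_mono) simp_all
  also have "\<dots> = A * exp (- (\<delta> * real K))"
    unfolding A_def \<delta>_def by (simp add: mult_exp_exp[symmetric] algebra_simps)
  also have "\<dots> \<le> 1 / 2"
  proof -
    have "2 * A \<le> \<delta> * real K"
      using K_large \<delta>_pos unfolding A_def \<delta>_def by (simp add: field_simps)
    also have "\<dots> \<le> exp (\<delta> * real K)"
      using exp_ge_add_one_self[of "\<delta> * real K"] by linarith
    finally show ?thesis
      by (simp add: exp_minus field_simps)
  qed
  finally show ?thesis .
qed

definition r4_denom :: "real \<Rightarrow> real" where
  "r4_denom \<alpha> = (1 - \<alpha>) / 2 - ln ((1 + \<alpha>) / 2)"

lemma r4_denom_pos:
  assumes "0 < \<alpha>" "\<alpha> < 1"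
  shows "0 < r4_denom \<alpha>"
proof -
  have "ln ((1 + \<alpha>) / 2) < 0"
    using assms by (intro ln_less_zero) auto
  moreover have "0 < (1 - \<alpha>) / 2"
    using assms by simp
  ultimately show ?thesis
    unfolding r4_denom_def by linarith
qed

lemma r4_denom_less_neg_ln:
  assumes "0 < \<alpha>" "\<alpha> < 1"
  shows "r4_denom \<alpha> < - ln \<alpha>"
proof -
  have "1 - 2 * \<alpha> / (1 + \<alpha>) \<le> ln ((1 + \<alpha>) / (2 * \<alpha>))"
    using ln_le_minus_one[of "2 * \<alpha> / (1 + \<alpha>)"] assms by (simp add: ln_div)
  moreover have "(1 - \<alpha>) / 2 < 1 - 2 * \<alpha> / (1 + \<alpha>)"
  proof -
    have "0 < (1 - \<alpha>) * (1 - \<alpha>)"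
      using assms by simp
    then show ?thesis
      using assms by (simp add: field_simps algebra_simps)
  qed
  moreover have "ln ((1 + \<alpha>) / (2 * \<alpha>)) = ln ((1 + \<alpha>) / 2) - ln \<alpha>"
    using assms by (simp add: ln_div ln_mult)
  ultimately show ?thesis
    unfolding r4_denom_def by linarith
qed

lemma ln_less_of_r4_less:
  assumes "0 < \<alpha>" "\<alpha> < 1" "r4 \<alpha> l n < K"
  shows "ln (1 + n * \<alpha> / l) < r4_denom \<alpha> * K - (r4_denom \<alpha> + \<alpha> + ln (1 - \<alpha>))"
proof -
  have "(ln (1 + n * \<alpha> / l) + \<alpha> + ln (1 - \<alpha>)) / r4_denom \<alpha> < K - 1"
    using assms(3) unfolding r4_def r4_denom_def by simp
  then have "ln (1 + n * \<alpha> / l) + \<alpha> + ln (1 - \<alpha>) < (K - 1) * r4_denom \<alpha>"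
    using r4_denom_pos[OF assms(1,2)] by (simp add: pos_divide_less_eq)
  then show ?thesis
    by (simp add: algebra_simps)
qed

text \<open>The two constants are the lower bounds on \<open>K\<close> required by \<open>base_le_half_if_small\<close>, with
  \<open>M = exp (- C) / \<alpha>\<close> for the constant \<open>C\<close> of \<open>ln_less_of_r4_less\<close>, and by \<open>base_le_half_if_large\<close>,
  with \<open>\<rho> = (1 + \<alpha>) / 2\<close>.\<close>

definition K_threshold :: "real \<Rightarrow> real" where
  "K_threshold \<alpha> =
     max (2 * exp (1 + 1 / \<alpha>) * (exp (- (r4_denom \<alpha> + \<alpha> + ln (1 - \<alpha>))) / \<alpha>)
            / (- ln \<alpha> - r4_denom \<alpha>))
         (4 * exp 1 / (ln ((1 + \<alpha>) / 2))\<^sup>2)"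

lemma union_base_le_half:
  fixes \<alpha> lam :: real and n g K r :: nat
  assumes \<alpha>: "0 < \<alpha>" "\<alpha> < 1" and lam: "0 < lam" "lam \<le> real r"
    and g: "real g \<le> \<alpha> * real n" and r: "2 * r + g \<le> n"
    and K_gt_r4: "r4 \<alpha> lam (real n) < real K" and K_large: "K_threshold \<alpha> \<le> real K"
  shows "exp 1 * real n / real r * ((real r + real g) / real n) ^ K \<le> 1 / 2"
proof -
  define C where "C = r4_denom \<alpha> + \<alpha> + ln (1 - \<alpha>)"
  have r_pos: "0 < r" and n_pos: "0 < n"
    using lam r by linarith+
  show ?thesis
  proof (cases "real r * real K \<le> real n")
    case True
    have "real n / real r \<le> real n / lam"
      using lam n_pos by (intro divide_left_mono) auto
    also have "\<dots> \<le> (1 + real n * \<alpha> / lam) / \<alpha>"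
      using \<alpha> lam by (simp add: field_simps)
    also have "\<dots> \<le> exp (r4_denom \<alpha> * real K - C) / \<alpha>"
    proof -
      have "0 < 1 + real n * \<alpha> / lam"
        using \<alpha> lam by (simp add: add_pos_nonneg)
      then have "1 + real n * \<alpha> / lam < exp (r4_denom \<alpha> * real K - C)"
        using ln_less_of_r4_less[OF \<alpha> K_gt_r4] unfolding C_def by (metis exp_less_cancel_iff exp_ln)
      then show ?thesis
        using \<alpha> by (simp add: divide_right_mono)
    qed
    also have "\<dots> = exp (- C) / \<alpha> * exp (r4_denom \<alpha> * real K)"
      by (simp add: exp_diff exp_minus field_simps)
    finally have ratio: "real n / real r \<le> exp (- C) / \<alpha> * exp (r4_denom \<alpha> * real K)" .
    show ?thesis
      using base_le_half_if_small[OF \<alpha>(1) _ _ _ g True _ ratio r4_denom_less_neg_ln[OF \<alpha>]]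
        K_large r_pos n_pos \<alpha> unfolding K_threshold_def C_def by simp
  next
    case False
    have "real (2 * r + g) \<le> real n"
      using r by (simp only: of_nat_le_iff)
    then have "2 * (real r + real g) \<le> real n + real g"
      by simp
    also have "\<dots> \<le> real n * (1 + \<alpha>)"
      using g by (simp add: algebra_simps)
    finally have "(real r + real g) / real n \<le> (1 + \<alpha>) / 2"
      using n_pos by (simp add: field_simps)
    then show ?thesis
      using base_le_half_if_large[of "(1 + \<alpha>) / 2" "real r" "real n" "real g" K] False
        K_large \<alpha> r_pos n_pos unfolding K_threshold_def by simp
  qed
qed

lemma union_term_le_half_pow:
  fixes \<alpha> lam :: real and n g K r :: nat
  assumes \<alpha>: "0 < \<alpha>" "\<alpha> < 1" and lam: "0 < lam" "lam \<le> real r"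
    and g: "real g \<le> \<alpha> * real n" and r: "2 * r + g \<le> n"
    and K_gt_r4: "r4 \<alpha> lam (real n) < real K" and K_large: "K_threshold \<alpha> \<le> real K"
  shows "real ((n - g) choose r) * ((real r + real g) / real n) ^ (K * r) \<le> (1 / 2) ^ r"
proof -
  define x where "x = ((real r + real g) / real n) ^ K"
  have r_pos: "0 < r"
    using lam by linarith
  have "real ((n - g) choose r) \<le> (exp 1 * real (n - g) / real r) ^ r"
    using r_pos by (rule binomial_le_exp_pow)
  also have "\<dots> \<le> (exp 1 * real n / real r) ^ r"
    by (intro power_mono divide_right_mono mult_left_mono) auto
  finally have "real ((n - g) choose r) * x ^ r \<le> (exp 1 * real n / real r) ^ r * x ^ r"
    unfolding x_def by (intro mult_right_mono) auto
  also have "\<dots> = (exp 1 * real n / real r * x) ^ r"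
    by (simp only: power_mult_distrib)
  also have "\<dots> \<le> (1 / 2) ^ r"
    using union_base_le_half[OF assms] unfolding x_def by (intro power_mono) auto
  finally show ?thesis
    unfolding x_def by (simp add: power_mult)
qed

section \<open>Asymptotics\<close>

lemma prob_small_Cmax_le:
  fixes \<alpha> lam :: real and n g K :: nat
  assumes \<alpha>: "0 < \<alpha>" "\<alpha> < 1" and g_def: "g = nat \<lfloor>\<alpha> * real n\<rfloor>"
    and lam: "0 < lam" "4 * lam \<le> (1 - \<alpha>) * real n"
    and K: "K < n" "r4 \<alpha> lam (real n) < real K" "K_threshold \<alpha> \<le> real K"
  shows "measure_pmf.prob (H_model n K g) {\<omega>. real (Cmax_size n \<omega>) \<le> real n - real g - lam}
           \<le> 2 * (1 / 2) ^ nat \<lfloor>lam\<rfloor>"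
  unfolding H_model_def
proof (rule measure_pair_pmf_le)
  fix D
  assume D_in: "D \<in> set_pmf (deleted_set n g)"
  have g: "real g \<le> \<alpha> * real n"
    unfolding g_def using \<alpha> by simp
  then have g_le: "g \<le> n"
    using \<alpha> mult_left_le_one_le[of "real n" \<alpha>] by simp
  with D_in have D: "D \<subseteq> {1..n}" "card D = g"
    by (simp_all add: set_pmf_deleted_set)
  have "4 * lam \<le> real (n - g)"
    using lam(2) g g_le by (simp add: of_nat_diff algebra_simps)
  note lam = lam(1) this
  define I where "I = {r. r \<le> n - g \<and> lam \<le> real r \<and> 2 * r \<le> n - g}"
  have "measure_pmf.prob (kout_choice n K)
          {\<Gamma>. (\<Gamma>, D) \<in> {\<omega>. real (Cmax_size n \<omega>) \<le> real n - real g - lam}}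
      = measure_pmf.prob (kout_choice n K)
          {\<Gamma>. real (max_component_size \<Gamma> ({1..n} - D)) \<le> real n - real g - lam}"
    by (simp add: Cmax_size_def)
  also have "\<dots> \<le> (\<Sum>r\<in>I. real ((n - g) choose r) * ((real r + real g) / real n) ^ (K * r))"
    unfolding I_def using D K(1) lam by (rule prob_small_max_component_le)
  also have "\<dots> \<le> (\<Sum>r\<in>I. (1 / 2) ^ r)"
    using union_term_le_half_pow[OF \<alpha> lam(1) _ g _ K(2,3)] g_le
    by (intro sum_mono) (auto simp: I_def)
  also have "\<dots> \<le> (1 / 2) ^ nat \<lfloor>lam\<rfloor> / (1 - 1 / 2)"
    by (intro sum_power_tail_le) (auto simp: I_def nat_le_iff floor_le_iff)
  finally show "measure_pmf.prob (kout_choice n K)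
          {\<Gamma>. (\<Gamma>, D) \<in> {\<omega>. real (Cmax_size n \<omega>) \<le> real n - real g - lam}}
      \<le> 2 * (1 / 2) ^ nat \<lfloor>lam\<rfloor>"
    by simp
qed

lemma r4_tendsto_at_top:
  fixes lam :: "nat \<Rightarrow> real"
  assumes \<alpha>: "0 < \<alpha>" "\<alpha> < 1" and small: "lam \<in> o(\<lambda>n. real n)"
    and pos: "\<forall>\<^sub>F n in sequentially. 0 < lam n"
  shows "filterlim (\<lambda>n. r4 \<alpha> (lam n) (real n)) at_top sequentially"
  unfolding filterlim_at_top
proof
  fix T :: real
  define C where "C = r4_denom \<alpha> * (T - 1) - \<alpha> - ln (1 - \<alpha>)"
  define \<epsilon> where "\<epsilon> = \<alpha> / exp C"
  have "0 < \<epsilon>"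
    unfolding \<epsilon>_def using \<alpha> by simp
  with small have "\<forall>\<^sub>F n in sequentially. norm (lam n) \<le> \<epsilon> * norm (real n)"
    by (rule landau_o.smallD)
  with pos show "\<forall>\<^sub>F n in sequentially. T \<le> r4 \<alpha> (lam n) (real n)"
  proof eventually_elim
    case (elim n)
    then have le: "lam n \<le> \<epsilon> * real n"
      by simp
    have "exp C = \<alpha> / \<epsilon>"
      unfolding \<epsilon>_def using \<alpha> by simp
    also have "\<dots> \<le> real n * \<alpha> / lam n"
      using le elim \<alpha> \<open>0 < \<epsilon>\<close> by (simp add: field_simps)
    also have "\<dots> < 1 + real n * \<alpha> / lam n"
      by simp
    finally have "C < ln (1 + real n * \<alpha> / lam n)"
      by (metis exp_gt_zero exp_less_cancel_iff exp_ln order_less_trans)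
    then have "T - 1 \<le> (ln (1 + real n * \<alpha> / lam n) + \<alpha> + ln (1 - \<alpha>)) / r4_denom \<alpha>"
      using r4_denom_pos[OF \<alpha>] unfolding C_def by (simp add: field_simps)
    then show ?case
      unfolding r4_def r4_denom_def by simp
  qed
qed

lemma prob_small_Cmax_tendsto_0:
  fixes \<alpha> :: real and lam :: "nat \<Rightarrow> real" and K :: "nat \<Rightarrow> nat" and \<gamma> :: "nat \<Rightarrow> nat"
  assumes \<alpha>: "0 < \<alpha>" "\<alpha> < 1" and \<gamma>: "\<And>n. \<gamma> n = nat \<lfloor>\<alpha> * real n\<rfloor>"
    and small: "lam \<in> o(\<lambda>n. real n)" and large: "filterlim lam at_top sequentially"
    and K_lt: "\<forall>\<^sub>F n in sequentially. K n < n" and K_gt: "\<And>n. r4 \<alpha> (lam n) (real n) < real (K n)"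
  shows "(\<lambda>n. measure_pmf.prob (H_model n (K n) (\<gamma> n))
            {\<omega>. real (Cmax_size n \<omega>) \<le> real n - real (\<gamma> n) - lam n}) \<longlonglongrightarrow> 0"
proof (rule tendsto_sandwich[OF _ _ tendsto_const])
  have lam_pos: "\<forall>\<^sub>F n in sequentially. 0 < lam n"
    using large by (simp add: filterlim_at_top_dense)
  have "\<forall>\<^sub>F n in sequentially. norm (lam n) \<le> (1 - \<alpha>) / 4 * norm (real n)"
    using \<alpha> by (intro landau_o.smallD[OF small]) simp
  then have lam_small: "\<forall>\<^sub>F n in sequentially. 4 * lam n \<le> (1 - \<alpha>) * real n"
    by eventually_elim simp
  have "\<forall>\<^sub>F n in sequentially. K_threshold \<alpha> \<le> r4 \<alpha> (lam n) (real n)"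
    using r4_tendsto_at_top[OF \<alpha> small lam_pos] by (simp add: filterlim_at_top)
  then have K_large: "\<forall>\<^sub>F n in sequentially. K_threshold \<alpha> \<le> real (K n)"
    by eventually_elim (meson K_gt less_imp_le order_trans)
  show "\<forall>\<^sub>F n in sequentially. measure_pmf.prob (H_model n (K n) (\<gamma> n))
      {\<omega>. real (Cmax_size n \<omega>) \<le> real n - real (\<gamma> n) - lam n} \<le> 2 * (1 / 2) ^ nat \<lfloor>lam n\<rfloor>"
    using lam_pos lam_small K_lt K_large
    by eventually_elim (rule prob_small_Cmax_le[OF \<alpha> \<gamma> _ _ _ K_gt])
  have "(\<lambda>k. (1 / 2 :: real) ^ k) \<longlonglongrightarrow> 0"
    by (rule LIMSEQ_realpow_zero) simp_all
  then have "(\<lambda>n. (1 / 2 :: real) ^ nat \<lfloor>lam n\<rfloor>) \<longlonglongrightarrow> 0"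
    by (rule filterlim_compose[OF _ filterlim_compose[OF filterlim_nat_sequentially
          filterlim_compose[OF filterlim_floor_sequentially large]]])
  then show "(\<lambda>n. 2 * (1 / 2 :: real) ^ nat \<lfloor>lam n\<rfloor>) \<longlonglongrightarrow> 0"
    by (rule tendsto_mult_right_zero)
qed simp

theorem theorem3p4:
  fixes \<alpha> :: real and lam :: "nat \<Rightarrow> real" and K :: "nat \<Rightarrow> nat" and \<gamma> :: "nat \<Rightarrow> nat"
  assumes "0 < \<alpha>" "\<alpha> < 1"
    and "\<And>n. \<gamma> n = nat \<lfloor>\<alpha> * real n\<rfloor>"
    and "lam \<in> o(\<lambda>n. real n)"
    and "filterlim lam at_top sequentially"
    and "\<forall>\<^sub>F n in sequentially. K n < n"
    and "\<And>n. real (K n) > r4 \<alpha> (lam n) (real n)"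
  shows "(\<lambda>n. measure_pmf.prob (H_model n (K n) (\<gamma> n))
            {\<omega>. real (Cmax_size n \<omega>) > real n - real (\<gamma> n) - lam n})
         \<longlonglongrightarrow> 1"
proof -
  define P where "P n = measure_pmf.prob (H_model n (K n) (\<gamma> n))
    {\<omega>. real (Cmax_size n \<omega>) \<le> real n - real (\<gamma> n) - lam n}" for n
  have "P \<longlonglongrightarrow> 0"
    unfolding P_def using assms by (rule prob_small_Cmax_tendsto_0)
  then have "(\<lambda>n. 1 - P n) \<longlonglongrightarrow> 1"
    using tendsto_diff[OF tendsto_const[of 1]] by fastforce
  moreover have "measure_pmf.prob (H_model n (K n) (\<gamma> n))
      {\<omega>. real (Cmax_size n \<omega>) > real n - real (\<gamma> n) - lam n} = 1 - P n" for n
    using measure_pmf.prob_neg[of "H_model n (K n) (\<gamma> n)"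
        "\<lambda>\<omega>. real (Cmax_size n \<omega>) \<le> real n - real (\<gamma> n) - lam n"]
    unfolding P_def by (simp add: not_le)
  ultimately show ?thesis
    by simp
qed

end
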